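(* Let $s,k$ be positive integers with $s\leq\tfrac15 k$ and let $\vec s=(s,\dots,s)\in\mathbb{Z}_+^k$. Then \[ \mathrm{LCS}_2(4,\mathcal P_{\vec s})\leq(2s^2k)^{1/3}+\tfrac53 s+s^{4/3}k^{-1/3}. \]
   Context: For $\vec s\in\mathbb{Z}_+^k$, an $\vec s$-multipermutation is a word over $\{1,\dots,k\}$ in which each letter $l$ appears exactly $s_l$ times; $\mathcal P_{\vec s}$ is the set of all of them. $\mathrm{LCS}(w,w')$ is the length of a longest common subsequence of words $w,w'$. $\mathrm{LCS}_2(t,\mathcal P_{\vec s})$ is the minimum, over all sets of $t$ distinct elements of $\mathcal P_{\vec s}$, of the maximum $\mathrm{LCS}$ of two distinct members of the set. *)

theory Defs
  imports Complex_Main "HOL-Library.Sublist"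
begin

definition multiperms :: "nat \<Rightarrow> (nat \<Rightarrow> nat) \<Rightarrow> nat list set" where
  "multiperms k s = {w. set w \<subseteq> {1..k} \<and> (\<forall>l\<in>{1..k}. count_list w l = s l)}"

definition LCS :: "'a list \<Rightarrow> 'a list \<Rightarrow> nat" where
  "LCS w w' = Max {length u | u. subseq u w \<and> subseq u w'}"

definition LCS2 :: "nat \<Rightarrow> 'a list set \<Rightarrow> nat" where
  "LCS2 t P = Min {Max {LCS w w' | w w'. w \<in> T \<and> w' \<in> T \<and> w \<noteq> w'} | T.
                      T \<subseteq> P \<and> card T = t}"

end

theory Submission
  imports Defs
begin

(*
  Identify the letters with the points (x, y, z) of a box [P] \<times> [Q] \<times> [R], listed x-major.
  Inside an (x, y)-cell the z-coordinates are written either in blocks (each value s times in a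
  row) or interleaved (the whole range s times), ascending or descending; between cells, x and y
  are traversed ascending or descending. If two words traverse a coordinate in opposite
  directions, a common subsequence stays within one value of that coordinate; if in the same
  direction, it may visit all of them. Choosing the four combinations

    A = (x\<up>, y\<up>, blocks \<up>)   B = (x\<up>, y\<down>, blocks \<down>)
    C = (x\<down>, y\<up>, interleaved \<down>)   D = (x\<down>, y\<down>, interleaved \<up>)

  bounds every pairwise LCS by max (P (2s - 1)) (max (Q s) (s + R - 1)), where the cell-level
  bounds s, 2s - 1 and s + R - 1 come from counting ascents and descents of a common
  subsequence: each interleaved pattern allows at most s - 1 breaks of its order.
  With T = (2 s\<^sup>2 k)^(1/3) + 5s/3 and P, Q, R about T/(2s), T/s, T - s one gets P Q R \<ge> k,
  so truncating the box to its first k points yields s-multipermutations; as T < s k they are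
  pairwise distinct.
*)

lemma set_subseq_subset: "subseq xs ys \<Longrightarrow> set xs \<subseteq> set ys"
  by (induction rule: list_emb.induct) auto

lemma subseq_rev: "subseq xs ys \<Longrightarrow> subseq (rev xs) (rev ys)"
  by (induction rule: list_emb.induct) (auto intro: subseq_rev_drop_many list_emb_append_mono)

lemma subseq_map_imp_map_subseq: "subseq u (map f w) \<Longrightarrow> \<exists>v. u = map f v \<and> subseq v w"
  by (metis nths_map subseq_conv_nths)

lemma sorted_wrt_subseq: "subseq u w \<Longrightarrow> sorted_wrt R w \<Longrightarrow> sorted_wrt R u"
  by (induction rule: list_emb.induct) (auto dest: list_emb_set)

lemma count_list_filter: "count_list (filter P xs) x = (if P x then count_list xs x else 0)"
  by (induction xs) auto

lemma count_list_map_inj_on: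
  "inj_on f (insert x (set xs)) \<Longrightarrow> count_list (map f xs) (f x) = count_list xs x"
  by (induction xs) (auto simp: inj_on_def)

lemma count_list_upt: "count_list [0..<R] z = (if z < R then 1 else 0)"
  by (induction R) auto

section \<open>Bounds on common subsequences\<close>

(* LCS w w' \<le> b, phrased without Max so that it can be pushed through map, filter, rev and concat. *)
definition lcs_bounded :: "'a list \<Rightarrow> 'a list \<Rightarrow> nat \<Rightarrow> bool" where
  "lcs_bounded w w' b \<longleftrightarrow> (\<forall>u. subseq u w \<longrightarrow> subseq u w' \<longrightarrow> length u \<le> b)"

lemma lcs_boundedI:
  "(\<And>u. subseq u w \<Longrightarrow> subseq u w' \<Longrightarrow> length u \<le> b) \<Longrightarrow> lcs_bounded w w' b"
  unfolding lcs_bounded_def by blast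

lemma lcs_boundedD: "lcs_bounded w w' b \<Longrightarrow> subseq u w \<Longrightarrow> subseq u w' \<Longrightarrow> length u \<le> b"
  unfolding lcs_bounded_def by blast

lemma lcs_bounded_sym: "lcs_bounded w w' b \<Longrightarrow> lcs_bounded w' w b"
  unfolding lcs_bounded_def by blast

lemma lcs_bounded_mono: "lcs_bounded w w' b \<Longrightarrow> b \<le> c \<Longrightarrow> lcs_bounded w w' c"
  unfolding lcs_bounded_def by force

lemma length_le_if_lcs_bounded_self: "lcs_bounded w w b \<Longrightarrow> length w \<le> b"
  by (rule lcs_boundedD) auto

lemma LCS_le_if_lcs_bounded:
  assumes "lcs_bounded w w' b" shows "LCS w w' \<le> b"
proof -
  have "finite {length u | u. subseq u w \<and> subseq u w'}"
    by (rule finite_subset[of _ "{..length w}"]) (auto dest: list_emb_length)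
  moreover have "[] \<in> {u. subseq u w \<and> subseq u w'}" by simp
  ultimately show ?thesis
    unfolding LCS_def using assms by (auto intro!: Max.boundedI dest: lcs_boundedD)
qed

lemma lcs_bounded_rev: "lcs_bounded w w' b \<Longrightarrow> lcs_bounded (rev w) (rev w') b"
  by (rule lcs_boundedI) (metis lcs_boundedD length_rev rev_rev_ident subseq_rev)

lemma lcs_bounded_filter: "lcs_bounded w w' b \<Longrightarrow> lcs_bounded (filter P w) (filter P w') b"
  by (rule lcs_boundedI) (meson lcs_boundedD subseq_filter_left subseq_order.trans)

lemma lcs_bounded_map:
  assumes inj: "inj_on f (set w \<union> set w')" and bound: "lcs_bounded w w' b"
  shows "lcs_bounded (map f w) (map f w') b"
proof (rule lcs_boundedI)
  fix u assume "subseq u (map f w)" "subseq u (map f w')"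
  then obtain v v' where v: "u = map f v" "subseq v w" and v': "u = map f v'" "subseq v' w'"
    by (metis subseq_map_imp_map_subseq)
  have "set v \<union> set v' \<subseteq> set w \<union> set w'" using v(2) v'(2) by (auto dest: set_subseq_subset)
  then have "v = v'" using v(1) v'(1) inj_on_map_eq_map[OF inj_on_subset[OF inj]] by metis
  then show "length u \<le> b" using v v' bound by (auto dest: lcs_boundedD)
qed

fun breaks :: "('a \<Rightarrow> 'a \<Rightarrow> bool) \<Rightarrow> 'a list \<Rightarrow> nat" where
  "breaks R (a # b # xs) = (if R a b then 0 else 1) + breaks R (b # xs)"
| "breaks R _ = 0"

lemma breaks_sorted_wrt: "sorted_wrt R xs \<Longrightarrow> breaks R xs = 0"
  by (induction R xs rule: breaks.induct) auto

lemma breaks_append: "breaks R (xs @ ys) \<le> breaks R xs + 1 + breaks R ys"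
  by (induction R xs rule: breaks.induct; cases ys) auto

lemma breaks_subseq_concat:
  assumes "subseq u (concat Ls)" "\<forall>L\<in>set Ls. sorted_wrt R L"
  shows "breaks R u < max 1 (length Ls)"
  using assms
proof (induction Ls arbitrary: u)
  case Nil then show ?case by (auto dest: list_emb_Nil2)
next
  case (Cons L Ls)
  from Cons.prems(1) obtain u1 u2
    where u: "u = u1 @ u2" "subseq u1 L" "subseq u2 (concat Ls)"
    by (auto elim: subseq_appendE)
  have "breaks R u1 = 0"
    using u(2) Cons.prems(2) by (auto intro: breaks_sorted_wrt sorted_wrt_subseq)
  moreover have "u2 = [] \<or> breaks R u2 + 1 < Suc (length Ls)"
    using Cons.IH[OF u(3)] Cons.prems(2) u(3) by (cases Ls) auto
  ultimately show ?case using u breaks_append[of R u1 u2] by auto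
qed

lemma length_le_breaks_add_breaks:
  assumes "\<forall>a\<in>set xs. \<forall>b\<in>set xs. \<not> (R a b \<and> S a b)"
  shows "length xs \<le> breaks R xs + breaks S xs + 1"
  using assms by (induction R xs rule: breaks.induct) auto

lemma breaks_add_hd_le_last:
  fixes xs :: "nat list"
  assumes "sorted xs" "xs \<noteq> []"
  shows "breaks (\<ge>) xs + hd xs \<le> last xs"
  using assms by (induction "(\<ge>) :: nat \<Rightarrow> _" xs rule: breaks.induct) auto

lemma filter_concat_map_key:
  assumes "\<forall>x\<in>set xs. \<forall>t\<in>set (F x). \<phi> t = x" "distinct xs"
  shows "filter (\<lambda>t. \<phi> t = v) (concat (map F xs)) = (if v \<in> set xs then F v else [])"
  using assms by (induction xs) (auto simp: filter_empty_conv intro!: filter_True)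

lemma count_list_concat_map_key:
  assumes "\<forall>x\<in>set xs. \<forall>t\<in>set (F x). \<phi> t = x" "distinct xs" "\<phi> a \<in> set xs"
  shows "count_list (concat (map F xs)) a = count_list (F (\<phi> a)) a"
  using assms by (induction xs) (auto simp: count_list_0_iff)

lemma sorted_wrt_concat_map_key:
  assumes "\<forall>x\<in>set xs. \<forall>t\<in>set (F x). \<phi> t = x" "sorted_wrt R xs" "\<And>x. R x x"
  shows "sorted_wrt (\<lambda>a b. R (\<phi> a) (\<phi> b)) (concat (map F xs))"
  using assms(1,2)
proof (induction xs)
  case (Cons x xs)
  have "sorted_wrt (\<lambda>a b. R (\<phi> a) (\<phi> b)) (F x)"
    using Cons.prems assms(3) by (auto simp: sorted_wrt_iff_nth_less)
  then show ?case using Cons by (auto simp: sorted_wrt_append)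
qed simp

lemma lcs_bounded_concat_map_key:
  assumes keys: "\<forall>x\<in>set xs. \<forall>t\<in>set (F x). \<phi> t = x" "\<forall>x\<in>set ys. \<forall>t\<in>set (G x). \<phi> t = x"
    and "distinct xs" "distinct ys" "set xs = set ys"
    and bound: "\<forall>x\<in>set xs. lcs_bounded (F x) (G x) b"
  shows "lcs_bounded (concat (map F xs)) (concat (map G ys)) (length xs * b)"
proof (rule lcs_boundedI)
  fix u assume u: "subseq u (concat (map F xs))" "subseq u (concat (map G ys))"
  have "set (map \<phi> u) \<subseteq> set xs" using set_subseq_subset[OF u(1)] keys(1) by auto
  then have "length u = (\<Sum>v\<in>set xs. count_list (map \<phi> u) v)"
    by (simp add: sum_count_set)
  also have "\<dots> \<le> (\<Sum>v\<in>set xs. b)"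
  proof (rule sum_mono)
    fix v assume v: "v \<in> set xs"
    have "subseq (filter (\<lambda>t. \<phi> t = v) u) (F v)"
      using subseq_filter[OF u(1), of "\<lambda>t. \<phi> t = v"] filter_concat_map_key[OF keys(1) assms(3)] v by simp
    moreover have "subseq (filter (\<lambda>t. \<phi> t = v) u) (G v)"
      using subseq_filter[OF u(2), of "\<lambda>t. \<phi> t = v"] filter_concat_map_key[OF keys(2) assms(4)] v assms(5) by simp
    ultimately have "length (filter (\<lambda>t. \<phi> t = v) u) \<le> b" using bound v lcs_boundedD by blast
    then show "count_list (map \<phi> u) v \<le> b"
      by (simp add: count_list_eq_length_filter filter_map comp_def eq_commute)
  qed
  finally show "length u \<le> length xs * b" using assms(3) by (simp add: distinct_card)
qed

lemma lcs_bounded_concat_map_key_opposite: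
  fixes \<phi> :: "'a \<Rightarrow> 'k::linorder"
  assumes keys: "\<forall>x\<in>set xs. \<forall>t\<in>set (F x). \<phi> t = x" "\<forall>x\<in>set ys. \<forall>t\<in>set (G x). \<phi> t = x"
    and "distinct xs" "distinct ys" "set xs = set ys"
    and sorted: "sorted xs" "sorted_wrt (\<ge>) ys"
    and bound: "\<forall>x\<in>set xs. lcs_bounded (F x) (G x) b"
  shows "lcs_bounded (concat (map F xs)) (concat (map G ys)) b"
proof (rule lcs_boundedI)
  fix u assume u: "subseq u (concat (map F xs))" "subseq u (concat (map G ys))"
  show "length u \<le> b"
  proof (cases u)
    case Nil
    then show ?thesis by simp
  next
    case (Cons a u')
    \<comment> \<open>the key is monotone in both directions along u, so u lies in a single block\<close>
    have "sorted_wrt (\<lambda>a b. \<phi> a \<le> \<phi> b) u"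
      using sorted(1) keys(1) by (intro sorted_wrt_subseq[OF u(1)] sorted_wrt_concat_map_key)
        auto
    moreover have "sorted_wrt (\<lambda>a b. \<phi> a \<ge> \<phi> b) u"
      using sorted(2) keys(2) by (intro sorted_wrt_subseq[OF u(2)] sorted_wrt_concat_map_key)
        auto
    ultimately have "filter (\<lambda>t. \<phi> t = \<phi> a) u = u" using Cons by (fastforce intro: filter_True)
    then have F: "subseq u (if \<phi> a \<in> set xs then F (\<phi> a) else [])"
      and G: "subseq u (if \<phi> a \<in> set ys then G (\<phi> a) else [])"
      using subseq_filter[OF u(1), of "\<lambda>t. \<phi> t = \<phi> a"] subseq_filter[OF u(2), of "\<lambda>t. \<phi> t = \<phi> a"]
      by (simp_all only: filter_concat_map_key[OF keys(1) assms(3)]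
          filter_concat_map_key[OF keys(2) assms(4)])
    have "\<phi> a \<in> set xs" using F Cons by (auto split: if_splits)
    then show ?thesis using F G bound assms(5) lcs_boundedD[of "F (\<phi> a)" "G (\<phi> a)" b u] by simp
  qed
qed

definition updown :: "bool \<Rightarrow> nat \<Rightarrow> nat list" where
  "updown up n = (if up then [0..<n] else rev [0..<n])"

lemma distinct_updown [simp]: "distinct (updown d n)"
  and set_updown [simp]: "set (updown d n) = {..<n}"
  and length_updown [simp]: "length (updown d n) = n"
  by (auto simp: updown_def)

lemma lcs_bounded_concat_map_updown:
  assumes "\<forall>x<n. \<forall>t\<in>set (F x). \<phi> t = x" "\<forall>x<n. \<forall>t\<in>set (G x). \<phi> t = x"
    and "\<forall>x<n. lcs_bounded (F x) (G x) b"
  shows "lcs_bounded (concat (map F (updown d n))) (concat (map G (updown d' n)))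
           ((if d = d' then n else 1) * b)"
proof (cases "d = d'")
  case True
  then show ?thesis
    using lcs_bounded_concat_map_key[of "updown d n" F \<phi> "updown d' n" G b] assms
    by simp
next
  case False
  then consider "d" "\<not> d'" | "\<not> d" "d'" by blast
  then show ?thesis
  proof cases
    case 1
    then show ?thesis
      using lcs_bounded_concat_map_key_opposite[of "updown d n" F \<phi> "updown d' n" G b] assms
      by (simp add: updown_def sorted_wrt_rev)
  next
    case 2
    then show ?thesis
      using lcs_bounded_concat_map_key_opposite[of "updown d' n" G \<phi> "updown d n" F b] assms
      by (simp add: updown_def sorted_wrt_rev lcs_bounded_sym)
  qed
qed

definition grid_word :: "nat \<Rightarrow> nat \<Rightarrow> bool \<Rightarrow> bool \<Rightarrow> nat list \<Rightarrow> (nat \<times> nat \<times> nat) list" where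
  "grid_word P Q dx dy L =
     concat (map (\<lambda>x. concat (map (\<lambda>y. map (\<lambda>z. (x, y, z)) L) (updown dy Q))) (updown dx P))"

lemma lcs_bounded_grid_word:
  assumes "lcs_bounded L L' b"
  shows "lcs_bounded (grid_word P Q dx dy L) (grid_word P Q dx' dy' L')
           ((if dx = dx' then P else 1) * ((if dy = dy' then Q else 1) * b))"
proof -
  let ?cell = "\<lambda>L x y. map (\<lambda>z. (x, y, z)) L"
  let ?row = "\<lambda>L dy x. concat (map (?cell L x) (updown dy Q))"
  have "lcs_bounded (?cell L x y) (?cell L' x y) b" for x y
    using assms by (rule lcs_bounded_map[rotated]) (auto intro: inj_onI)
  then have row: "lcs_bounded (?row L dy x) (?row L' dy' x) ((if dy = dy' then Q else 1) * b)" for x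
    by (intro lcs_bounded_concat_map_updown[where \<phi> = "fst \<circ> snd"]) auto
  have "lcs_bounded (concat (map (?row L dy) (updown dx P))) (concat (map (?row L' dy') (updown dx' P)))
      ((if dx = dx' then P else 1) * ((if dy = dy' then Q else 1) * b))"
    by (rule lcs_bounded_concat_map_updown[where \<phi> = fst]) (auto simp: row)
  then show ?thesis unfolding grid_word_def .
qed

lemma set_grid_word: "set (grid_word P Q dx dy L) \<subseteq> {..<P} \<times> {..<Q} \<times> set L"
  by (auto simp: grid_word_def)

lemma count_list_grid_word:
  assumes "x < P" "y < Q"
  shows "count_list (grid_word P Q dx dy L) (x, y, z) = count_list L z"
proof -
  have "count_list (grid_word P Q dx dy L) (x, y, z)
      = count_list (concat (map (\<lambda>y. map (\<lambda>z. (x, y, z)) L) (updown dy Q))) (x, y, z)"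
    unfolding grid_word_def
    using assms by (subst count_list_concat_map_key[where \<phi> = fst]) auto
  also have "\<dots> = count_list (map (\<lambda>z. (x, y, z)) L) (x, y, z)"
    using assms
    by (subst count_list_concat_map_key[where \<phi> = "fst \<circ> snd"]) auto
  also have "\<dots> = count_list L z"
    using count_list_map_conv[of "\<lambda>z. (x, y, z)" L z] by (simp add: inj_def)
  finally show ?thesis .
qed

section \<open>The four cell patterns\<close>

definition stutter :: "nat \<Rightarrow> 'a list \<Rightarrow> 'a list" where
  "stutter s xs = concat (map (replicate s) xs)"

lemma rev_stutter: "rev (stutter s xs) = stutter s (rev xs)"
  by (induction xs) (auto simp: stutter_def)

lemma rev_concat_replicate: "rev (concat (replicate s xs)) = concat (replicate s (rev xs))"
  by (simp add: rev_concat)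

lemma set_stutter: "set (stutter s xs) \<subseteq> set xs"
  by (auto simp: stutter_def)

lemma count_list_stutter: "count_list (stutter s xs) x = s * count_list xs x"
  by (induction xs) (auto simp: stutter_def count_list_eq_length_filter)

lemma count_list_concat_replicate: "count_list (concat (replicate s xs)) x = s * count_list xs x"
  by (induction s) auto

lemma sorted_stutter: "sorted xs \<Longrightarrow> sorted (stutter s xs)"
  using sorted_wrt_concat_map_key[of xs "replicate s" id "(\<le>)"] by (simp add: stutter_def)

lemma breaks_subseq_concat_replicate:
  assumes "subseq u (concat (replicate s xs))" "sorted_wrt R xs" "0 < s"
  shows "breaks R u < s"
  using breaks_subseq_concat[OF assms(1)] assms(2,3) by simp

lemma lcs_bounded_stutter_rev:
  fixes xs :: "'a::linorder list"
  assumes "sorted_wrt (<) xs"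
  shows "lcs_bounded (stutter s xs) (stutter s (rev xs)) s"
  unfolding stutter_def
proof (rule lcs_bounded_concat_map_key_opposite[where \<phi> = id])
  show "\<forall>x\<in>set xs. lcs_bounded (replicate s x) (replicate s x) s"
    by (auto intro: lcs_boundedI dest!: list_emb_length)
qed (use assms in \<open>auto simp: strict_sorted_iff sorted_wrt_rev\<close>)

lemma lcs_bounded_stutter_concat_replicate_rev:
  fixes xs :: "'a::linorder list"
  assumes "sorted_wrt (<) xs" "0 < s"
  shows "lcs_bounded (stutter s xs) (concat (replicate s (rev xs))) s"
proof (rule lcs_boundedI)
  fix u assume u: "subseq u (stutter s xs)" "subseq u (concat (replicate s (rev xs)))"
  have "breaks (\<le>) u = 0"
    using assms(1) by (intro breaks_sorted_wrt sorted_wrt_subseq[OF u(1)] sorted_stutter)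
      (simp add: strict_sorted_iff)
  moreover have "breaks (>) u < s"
    using assms by (intro breaks_subseq_concat_replicate[OF u(2)]) (auto simp: sorted_wrt_rev)
  moreover have "length u \<le> breaks (\<le>) u + breaks (>) u + 1"
    by (rule length_le_breaks_add_breaks) auto
  ultimately show "length u \<le> s" by linarith
qed

lemma lcs_bounded_concat_replicate_rev:
  fixes xs :: "'a::linorder list"
  assumes "sorted_wrt (<) xs" "0 < s"
  shows "lcs_bounded (concat (replicate s (rev xs))) (concat (replicate s xs)) (2 * s - 1)"
proof (rule lcs_boundedI)
  fix u assume u: "subseq u (concat (replicate s (rev xs)))" "subseq u (concat (replicate s xs))"
  have "breaks (>) u < s"
    using assms by (intro breaks_subseq_concat_replicate[OF u(1)]) (auto simp: sorted_wrt_rev)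
  moreover have "breaks (<) u < s"
    using assms by (intro breaks_subseq_concat_replicate[OF u(2)])
  moreover have "length u \<le> breaks (>) u + breaks (<) u + 1"
    by (rule length_le_breaks_add_breaks) auto
  ultimately show "length u \<le> 2 * s - 1" by linarith
qed

lemma lcs_bounded_stutter_concat_replicate:
  fixes xs :: "nat list"
  assumes "sorted_wrt (<) xs" "set xs \<subseteq> {..<R}" "0 < s"
  shows "lcs_bounded (stutter s xs) (concat (replicate s xs)) (s + R - 1)"
proof (rule lcs_boundedI)
  fix u assume u: "subseq u (stutter s xs)" "subseq u (concat (replicate s xs))"
  show "length u \<le> s + R - 1"
  proof (cases "u = []")
    case False
    have "sorted u"
      using assms(1) by (intro sorted_wrt_subseq[OF u(1)] sorted_stutter) (simp add: strict_sorted_iff)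
    \<comment> \<open>u is sorted, so each pair that is not a descent raises the value, which stays below R\<close>
    then have "breaks (\<ge>) u + hd u \<le> last u" using False by (rule breaks_add_hd_le_last)
    moreover have "last u \<in> {..<R}"
      using last_in_set[OF False] set_subseq_subset[OF u(1)] set_stutter[of s xs] assms(2) by blast
    moreover have "breaks (<) u < s"
      using assms by (intro breaks_subseq_concat_replicate[OF u(2)])
    moreover have "length u \<le> breaks (<) u + breaks (\<ge>) u + 1"
      by (rule length_le_breaks_add_breaks) auto
    ultimately show ?thesis by simp
  qed simp
qed

lemma lcs_bounded_stutter_rev_concat_replicate:
  fixes xs :: "'a::linorder list"
  assumes "sorted_wrt (<) xs" "0 < s"
  shows "lcs_bounded (stutter s (rev xs)) (concat (replicate s xs)) s"
  using lcs_bounded_rev[OF lcs_bounded_stutter_concat_replicate_rev[OF assms]]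
  by (simp add: rev_stutter rev_concat_replicate)

lemma lcs_bounded_stutter_rev_concat_replicate_rev:
  fixes xs :: "nat list"
  assumes "sorted_wrt (<) xs" "set xs \<subseteq> {..<R}" "0 < s"
  shows "lcs_bounded (stutter s (rev xs)) (concat (replicate s (rev xs))) (s + R - 1)"
  using lcs_bounded_rev[OF lcs_bounded_stutter_concat_replicate[OF assms]]
  by (simp add: rev_stutter rev_concat_replicate)

section \<open>Encoding the box as an alphabet\<close>

definition mixed_radix :: "nat \<Rightarrow> nat \<Rightarrow> nat \<times> nat \<times> nat \<Rightarrow> nat" where
  "mixed_radix Q R = (\<lambda>(x, y, z). (x * Q + y) * R + z + 1)"

lemma mult_add_less_cancel:
  fixes a a' z z' R :: nat
  assumes "z < R" "z' < R" "a * R + z = a' * R + z'"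
  shows "a = a'" "z = z'"
proof -
  have "(a * R + z) div R = a" "(a' * R + z') div R = a'" using assms(1,2) by simp_all
  then show "a = a'" using assms(3) by simp
  then show "z = z'" using assms(3) by simp
qed

lemma inj_on_mixed_radix: "inj_on (mixed_radix Q R) ({..<P} \<times> {..<Q} \<times> {..<R})"
proof (rule inj_onI, clarsimp simp: mixed_radix_def)
  fix x y z x' y' z'
  assume "y < Q" "z < R" "y' < Q" "z' < R" "(x * Q + y) * R + z = (x' * Q + y') * R + z'"
  then show "x = x' \<and> y = y' \<and> z = z'" by (metis mult_add_less_cancel)
qed

lemma mixed_radix_image: "mixed_radix Q R ` ({..<P} \<times> {..<Q} \<times> {..<R}) = {1..P * Q * R}"
proof (rule card_subset_eq)
  show "mixed_radix Q R ` ({..<P} \<times> {..<Q} \<times> {..<R}) \<subseteq> {1..P * Q * R}"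
  proof (clarsimp simp: mixed_radix_def)
    fix x y z assume "x < P" "y < Q" "z < R"
    have "x * Q + y < Suc x * Q" using \<open>y < Q\<close> by simp
    also have "\<dots> \<le> P * Q" using \<open>x < P\<close> by (intro mult_le_mono1) simp
    finally have "Suc (x * Q + y) * R \<le> P * Q * R" by (intro mult_le_mono1) simp
    moreover have "(x * Q + y) * R + z < Suc (x * Q + y) * R" using \<open>z < R\<close> by simp
    ultimately show "Suc ((x * Q + y) * R + z) \<le> P * Q * R" by simp
  qed
  show "card (mixed_radix Q R ` ({..<P} \<times> {..<Q} \<times> {..<R})) = card {1..P * Q * R}"
    by (simp add: card_image[OF inj_on_mixed_radix] card_cartesian_product)
qed simp

(* Points with code above k are dropped, so the box may be larger than the alphabet. *)
definition encode_word :: "nat \<Rightarrow> nat \<Rightarrow> nat \<Rightarrow> (nat \<times> nat \<times> nat) list \<Rightarrow> nat list" where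
  "encode_word k Q R w = map (mixed_radix Q R) (filter (\<lambda>t. mixed_radix Q R t \<le> k) w)"

lemma lcs_bounded_encode_word:
  assumes "set w \<union> set w' \<subseteq> {..<P} \<times> {..<Q} \<times> {..<R}" "lcs_bounded w w' b"
  shows "lcs_bounded (encode_word k Q R w) (encode_word k Q R w') b"
  unfolding encode_word_def
  using assms by (intro lcs_bounded_map lcs_bounded_filter) (auto intro: inj_on_subset[OF inj_on_mixed_radix])

lemma encode_word_in_multiperms:
  assumes "set w \<subseteq> {..<P} \<times> {..<Q} \<times> {..<R}"
    and "\<forall>t\<in>{..<P} \<times> {..<Q} \<times> {..<R}. count_list w t = s" and "k \<le> P * Q * R"
  shows "encode_word k Q R w \<in> multiperms k (\<lambda>_. s)"
  unfolding multiperms_def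
proof (intro CollectI conjI ballI)
  show "set (encode_word k Q R w) \<subseteq> {1..k}"
    by (auto simp: encode_word_def mixed_radix_def)
  fix l assume "l \<in> {1..k}"
  then have "l \<in> mixed_radix Q R ` ({..<P} \<times> {..<Q} \<times> {..<R})"
    using assms(3) by (simp add: mixed_radix_image)
  then obtain t where t: "t \<in> {..<P} \<times> {..<Q} \<times> {..<R}" "mixed_radix Q R t = l"
    by blast
  have "count_list (encode_word k Q R w) l = count_list (filter (\<lambda>t. mixed_radix Q R t \<le> k) w) t"
    unfolding encode_word_def t(2)[symmetric] using assms(1) t(1)
    by (intro count_list_map_inj_on inj_on_subset[OF inj_on_mixed_radix]) auto
  also have "\<dots> = s" using t assms(2) \<open>l \<in> {1..k}\<close> by (auto simp: count_list_filter)
  finally show "count_list (encode_word k Q R w) l = s" .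
qed

section \<open>Four multipermutations with small pairwise LCS\<close>

lemma length_multiperms:
  assumes "w \<in> multiperms k s" shows "length w = (\<Sum>l\<in>{1..k}. s l)"
proof -
  have "length w = (\<Sum>l\<in>{1..k}. count_list w l)"
    using assms sum_count_set[of w "{1..k}"] by (simp add: multiperms_def)
  also have "\<dots> = (\<Sum>l\<in>{1..k}. s l)"
    using assms by (simp add: multiperms_def)
  finally show ?thesis .
qed

lemma finite_multiperms: "finite (multiperms k s)"
proof (rule finite_subset)
  show "multiperms k s \<subseteq> {w. set w \<subseteq> {1..k} \<and> length w = (\<Sum>l\<in>{1..k}. s l)}"
    using length_multiperms by (auto simp: multiperms_def)
qed (simp add: finite_lists_length_eq)

lemma LCS2_le:
  assumes "finite A" "T \<subseteq> A" "card T = t" "2 \<le> t"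
    and "\<And>w w'. w \<in> T \<Longrightarrow> w' \<in> T \<Longrightarrow> w \<noteq> w' \<Longrightarrow> LCS w w' \<le> M"
  shows "LCS2 t A \<le> M"
proof -
  let ?pairs = "\<lambda>T. {LCS w w' | w w'. w \<in> T \<and> w' \<in> T \<and> w \<noteq> w'}"
  have "finite T" using assms(1,2) by (rule finite_subset[rotated])
  then have "\<not> (\<forall>w\<in>T. \<forall>w'\<in>T. w = w')" using assms(3,4) card_le_Suc0_iff_eq by fastforce
  then have "?pairs T \<noteq> {}" by blast
  moreover have "finite (?pairs T)"
    by (rule finite_subset[of _ "(\<lambda>(w, w'). LCS w w') ` (T \<times> T)"]) (auto simp: \<open>finite T\<close>)
  ultimately have "Max (?pairs T) \<le> M" using assms(5) by (auto intro!: Max.boundedI)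
  moreover have "LCS2 t A \<le> Max (?pairs T)"
    unfolding LCS2_def
  proof (rule Min_le)
    show "finite {Max (?pairs T) | T. T \<subseteq> A \<and> card T = t}"
      by (rule finite_subset[of _ "(\<lambda>T. Max (?pairs T)) ` Pow A"]) (auto simp: assms(1))
  qed (use assms(2,3) in blast)
  ultimately show ?thesis by linarith
qed

lemma LCS2_4_le:
  assumes "finite X" "\<forall>w\<in>X. M < length w" "A \<in> X" "B \<in> X" "C \<in> X" "D \<in> X"
    and AB: "lcs_bounded A B M" and AC: "lcs_bounded A C M" and AD: "lcs_bounded A D M"
    and BC: "lcs_bounded B C M" and BD: "lcs_bounded B D M" and CD: "lcs_bounded C D M"
  shows "LCS2 4 X \<le> M"
proof -
  have "w \<noteq> w'" if "w \<in> X" "lcs_bounded w w' M" for w w'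
    using that assms(2) length_le_if_lcs_bounded_self[of w M] by force
  then have "card {A, B, C, D} = 4" using assms(3-6) AB AC AD BC BD CD by simp
  moreover have "lcs_bounded w w' M" if "w \<in> {A, B, C, D}" "w' \<in> {A, B, C, D}" "w \<noteq> w'" for w w'
    using that AB AC AD BC BD CD lcs_bounded_sym[OF AB] lcs_bounded_sym[OF AC] lcs_bounded_sym[OF AD]
      lcs_bounded_sym[OF BC] lcs_bounded_sym[OF BD] lcs_bounded_sym[OF CD] by auto
  ultimately show ?thesis
    using assms(1,3-6) by (intro LCS2_le[of X "{A, B, C, D}"] LCS_le_if_lcs_bounded) auto
qed

lemma lcs_bounded_encode_grid_word:
  assumes "set L \<union> set L' \<subseteq> {..<R}" "lcs_bounded L L' b"
  shows "lcs_bounded (encode_word k Q R (grid_word P Q dx dy L)) (encode_word k Q R (grid_word P Q dx' dy' L'))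
           ((if dx = dx' then P else 1) * ((if dy = dy' then Q else 1) * b))"
  using assms set_grid_word[of P Q dx dy L] set_grid_word[of P Q dx' dy' L']
  by (intro lcs_bounded_encode_word[where P = P] lcs_bounded_grid_word) auto

lemma encode_grid_word_in_multiperms:
  assumes "set L \<subseteq> {..<R}" "\<forall>z<R. count_list L z = s" "k \<le> P * Q * R"
  shows "encode_word k Q R (grid_word P Q dx dy L) \<in> multiperms k (\<lambda>_. s)"
  using assms set_grid_word[of P Q dx dy L]
  by (intro encode_word_in_multiperms) (auto simp: count_list_grid_word)

lemma LCS2_4_multiperms_le:
  assumes "0 < s" "k \<le> P * Q * R"
    and M: "M = max (P * (2 * s - 1)) (max (Q * s) (s + R - 1))" and "M < k * s"
  shows "LCS2 4 (multiperms k (\<lambda>_. s)) \<le> M"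
proof -
  let ?word = "\<lambda>dx dy L. encode_word k Q R (grid_word P Q dx dy L)"
  let ?up = "[0..<R]"
  define A where "A = ?word True True (stutter s ?up)"
  define B where "B = ?word True False (stutter s (rev ?up))"
  define C where "C = ?word False True (concat (replicate s (rev ?up)))"
  define D where "D = ?word False False (concat (replicate s ?up))"
  have sets: "set (stutter s ?up) \<subseteq> {..<R}" "set (stutter s (rev ?up)) \<subseteq> {..<R}"
      "set (concat (replicate s ?up)) \<subseteq> {..<R}" "set (concat (replicate s (rev ?up))) \<subseteq> {..<R}"
    using set_stutter[of s ?up] set_stutter[of s "rev ?up"] by auto
  have bounds: "P * (2 * s - 1) \<le> M" "Q * s \<le> M" "s + R - 1 \<le> M" unfolding M by simp_all
  have "P * s \<le> P * (2 * s - 1)" using assms(1) by (intro mult_le_mono2) linarith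
  with bounds(1) have "P * s \<le> M" by (rule le_trans[rotated])
  show ?thesis
  proof (rule LCS2_4_le[OF finite_multiperms])
    show "\<forall>w\<in>multiperms k (\<lambda>_. s). M < length w"
      using \<open>M < k * s\<close> by (simp add: length_multiperms)
    show "A \<in> multiperms k (\<lambda>_. s)" "B \<in> multiperms k (\<lambda>_. s)"
      "C \<in> multiperms k (\<lambda>_. s)" "D \<in> multiperms k (\<lambda>_. s)"
      unfolding A_def B_def C_def D_def using sets assms(2)
      by (auto intro!: encode_grid_word_in_multiperms
          simp: count_list_stutter count_list_concat_replicate count_list_upt)
    show "lcs_bounded A B M" unfolding A_def B_def
      by (rule lcs_bounded_mono[OF lcs_bounded_encode_grid_word[OF _ lcs_bounded_stutter_rev]])
        (use sets \<open>P * s \<le> M\<close> in auto)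
    show "lcs_bounded A C M" unfolding A_def C_def
      by (rule lcs_bounded_mono[OF lcs_bounded_encode_grid_word[OF _
            lcs_bounded_stutter_concat_replicate_rev]]) (use sets bounds assms(1) in auto)
    show "lcs_bounded A D M" unfolding A_def D_def
      by (rule lcs_bounded_mono[OF lcs_bounded_encode_grid_word[OF _
            lcs_bounded_stutter_concat_replicate]]) (use sets bounds assms(1) in auto)
    show "lcs_bounded B C M" unfolding B_def C_def
      by (rule lcs_bounded_mono[OF lcs_bounded_encode_grid_word[OF _
            lcs_bounded_stutter_rev_concat_replicate_rev]]) (use sets bounds assms(1) in auto)
    show "lcs_bounded B D M" unfolding B_def D_def
      by (rule lcs_bounded_mono[OF lcs_bounded_encode_grid_word[OF _
            lcs_bounded_stutter_rev_concat_replicate]]) (use sets bounds assms(1) in auto)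
    show "lcs_bounded C D M" unfolding C_def D_def
      by (rule lcs_bounded_mono[OF lcs_bounded_encode_grid_word[OF _
            lcs_bounded_concat_replicate_rev]]) (use sets bounds assms(1) in auto)
  qed
qed

section \<open>Choosing the dimensions of the box\<close>

lemma nat_floor_divide_bounds:
  fixes a d :: real
  assumes "0 \<le> a" "0 < d"
  shows "real (nat \<lfloor>a / d\<rfloor>) * d \<le> a" "a / d - 1 < real (nat \<lfloor>a / d\<rfloor>)"
proof -
  have eq: "real (nat \<lfloor>a / d\<rfloor>) = of_int \<lfloor>a / d\<rfloor>" using assms by simp
  have "of_int \<lfloor>a / d\<rfloor> \<le> a / d" by (rule of_int_floor_le)
  then show "real (nat \<lfloor>a / d\<rfloor>) * d \<le> a" using assms(2) by (simp add: eq le_divide_eq)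
  show "a / d - 1 < real (nat \<lfloor>a / d\<rfloor>)" unfolding eq by (rule real_of_int_floor_gt_diff_one)
qed

lemma cubic_lt_product:
  fixes s u p q r :: real
  assumes "1 \<le> s" "1 \<le> u" "u - 1/6 < p" "2 * u + 2/3 < q" "2 * s * u + 2/3 * s < r"
  shows "4 * s * u ^ 3 < p * q * r"
proof -
  have "1 \<le> u ^ 2" using assms(2) by (rule one_le_power)
  then have "4 * s * u ^ 3 \<le> 4 * s * (u ^ 3 + u ^ 2 / 2 - 1/54)"
    using assms(1) by (intro mult_left_mono) auto
  also have "\<dots> = (u - 1/6) * (2 * u + 2/3) * (2 * s * u + 2/3 * s)"
    by (simp add: algebra_simps power3_eq_cube power2_eq_square)
  also have "\<dots> < p * q * r"
    using assms by (intro mult_strict_mono) auto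
  finally show ?thesis .
qed

lemma nat_floor_sub_bounds:
  fixes T :: real and s :: nat
  assumes "real s \<le> T"
  shows "real (s + (nat \<lfloor>T\<rfloor> + 1 - s) - 1) \<le> T" "T - real s < real (nat \<lfloor>T\<rfloor> + 1 - s)"
proof -
  have fl: "real (nat \<lfloor>T\<rfloor>) \<le> T" "T - 1 < real (nat \<lfloor>T\<rfloor>)"
    using nat_floor_divide_bounds[of T 1] assms by auto
  have "s \<le> nat \<lfloor>T\<rfloor>" using assms by (simp add: le_nat_floor)
  then have "s + (nat \<lfloor>T\<rfloor> + 1 - s) - 1 = nat \<lfloor>T\<rfloor>"
    "real (nat \<lfloor>T\<rfloor> + 1 - s) = real (nat \<lfloor>T\<rfloor>) + 1 - real s"
    by (auto simp: of_nat_diff)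
  then show "real (s + (nat \<lfloor>T\<rfloor> + 1 - s) - 1) \<le> T" "T - real s < real (nat \<lfloor>T\<rfloor> + 1 - s)"
    using fl by linarith+
qed

lemma grid_dimensions:
  fixes s :: nat and u :: real
  assumes "0 < s" "1 \<le> u"
  defines "T \<equiv> 2 * real s * u + 5/3 * real s"
  obtains P Q R :: nat
  where "real (P * (2 * s - 1)) \<le> T" "real (Q * s) \<le> T" "real (s + R - 1) \<le> T"
    and "4 * real s * u ^ 3 < real (P * Q * R)"
proof -
  have s: "1 \<le> real s" using assms(1) by simp
  have T_ge: "real s \<le> T"
    unfolding T_def using mult_nonneg_nonneg[of "2 * real s" u] s assms(2) by linarith
  have d: "0 < real (2 * s - 1)" "real (2 * s - 1) \<le> 2 * real s" using assms(1) by auto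
  define P where "P = nat \<lfloor>T / real (2 * s - 1)\<rfloor>"
  define Q where "Q = nat \<lfloor>T / real s\<rfloor>"
  define R where "R = nat \<lfloor>T\<rfloor> + 1 - s"
  have P: "real (P * (2 * s - 1)) \<le> T" "u - 1/6 < real P"
  proof -
    show "real (P * (2 * s - 1)) \<le> T"
      using nat_floor_divide_bounds(1)[of T] T_ge s d unfolding P_def by simp
    \<comment> \<open>naming the divisor stops linarith from case-splitting the truncated subtraction in it\<close>
    define e where "e = real (2 * s - 1)"
    have "u + 5/6 = T / (2 * real s)" unfolding T_def using s by (simp add: field_simps)
    also have "\<dots> \<le> T / e" unfolding e_def using d T_ge s by (intro divide_left_mono) auto
    finally have "u + 5/6 \<le> T / e" .
    moreover have "T / e - 1 < real P"
      unfolding P_def e_def using T_ge s d by (intro nat_floor_divide_bounds(2)) auto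
    ultimately show "u - 1/6 < real P" by linarith
  qed
  have Q: "real (Q * s) \<le> T" "2 * u + 2/3 < real Q"
  proof -
    show "real (Q * s) \<le> T"
      using nat_floor_divide_bounds(1)[of T "real s"] T_ge s unfolding Q_def by simp
    have "T / real s = 2 * u + 5/3" unfolding T_def using s by (simp add: field_simps)
    moreover have "T / real s - 1 < real Q"
      unfolding Q_def using T_ge s by (intro nat_floor_divide_bounds(2)) auto
    ultimately show "2 * u + 2/3 < real Q" by linarith
  qed
  have "T - real s = 2 * real s * u + 2/3 * real s" unfolding T_def by simp
  then have R: "real (s + R - 1) \<le> T" "2 * real s * u + 2/3 * real s < real R"
    using nat_floor_sub_bounds[OF T_ge] unfolding R_def by auto
  have "4 * real s * u ^ 3 < real P * real Q * real R"
    using cubic_lt_product[OF s assms(2) P(2) Q(2) R(2)] .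
  then show thesis using P(1) Q(1) R(1) that by simp
qed

lemma cube_root_split:
  fixes s k :: real
  assumes "0 < s" "0 \<le> k"
  shows "(2 * s ^ 2 * k) powr (1/3) = 2 * s * (k / (4 * s)) powr (1/3)"
proof -
  have "((2 * s) ^ 3) powr (1/3) = ((2 * s) powr 3) powr (1/3)"
    using assms by (simp add: powr_realpow)
  also have "\<dots> = 2 * s"
    using assms by (simp only: powr_powr) simp
  finally have cube: "((2 * s) ^ 3) powr (1/3) = 2 * s" .
  have "2 * s ^ 2 * k = (2 * s) ^ 3 * (k / (4 * s))"
    using assms by (simp add: field_simps power3_eq_cube power2_eq_square)
  then show ?thesis using assms by (simp only: powr_mult cube)
qed

lemma linear_lt_cubic:
  fixes s u :: real
  assumes "1 \<le> s" "1 \<le> u"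
  shows "2 * s * u + 5/3 * s < s * (4 * s * u ^ 3)"
proof -
  have "1 \<le> u * u" using mult_mono[of 1 u 1 u] assms(2) by simp
  then have "u * 1 \<le> u * (u * u)" using assms(2) by (intro mult_left_mono) auto
  then have "u \<le> u ^ 3" by (simp add: power3_eq_cube)
  then have "2 * u + 5/3 < 4 * u ^ 3" using assms(2) by linarith
  then have "s * (2 * u + 5/3) < s * (4 * u ^ 3)" using assms(1) by simp
  also have "\<dots> \<le> s * (4 * s * u ^ 3)" using assms by simp
  finally show ?thesis by (simp add: algebra_simps)
qed

lemma cube_root_parametrization:
  fixes s k :: nat
  assumes "0 < s" "4 * s \<le> k"
  obtains u :: real
  where "1 \<le> u" "real k = 4 * real s * u ^ 3" "(2 * real s ^ 2 * real k) powr (1/3) = 2 * real s * u"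
proof
  define u where "u = (real k / (4 * real s)) powr (1/3)"
  have "1 \<le> real k / (4 * real s)" using assms by simp
  then show u: "1 \<le> u" unfolding u_def by (rule ge_one_powr_ge_zero) simp
  have "u ^ 3 = u powr 3" using u by (simp add: powr_realpow)
  also have "\<dots> = real k / (4 * real s)" unfolding u_def by (simp only: powr_powr) simp
  finally show "real k = 4 * real s * u ^ 3" using assms(1) by simp
  show "(2 * real s ^ 2 * real k) powr (1/3) = 2 * real s * u"
    unfolding u_def using assms(1) by (simp add: cube_root_split)
qed

lemma LCS2_4_multiperms_le_cubic:
  fixes s k :: nat and u :: real
  assumes "0 < s" "1 \<le> u" and k: "real k = 4 * real s * u ^ 3"
  shows "real (LCS2 4 (multiperms k (\<lambda>_. s))) \<le> 2 * real s * u + 5/3 * real s"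
proof -
  define T where "T = 2 * real s * u + 5/3 * real s"
  obtain P Q R where PQR: "real (P * (2 * s - 1)) \<le> T" "real (Q * s) \<le> T" "real (s + R - 1) \<le> T"
    and "4 * real s * u ^ 3 < real (P * Q * R)"
    using grid_dimensions[OF assms(1,2)] unfolding T_def by blast
  then have "real k < real (P * Q * R)" by (simp only: k)
  then have "k \<le> P * Q * R" by (simp only: of_nat_less_iff less_imp_le_nat)
  define M where "M = max (P * (2 * s - 1)) (max (Q * s) (s + R - 1))"
  have "real M \<le> T" using PQR by (simp add: M_def of_nat_max)
  moreover have "T < real s * real k"
    using linear_lt_cubic[OF _ assms(2), of "real s"] assms(1) k unfolding T_def by simp
  ultimately have "real M < real (k * s)" by (simp add: mult.commute)
  then have "M < k * s" by (simp only: of_nat_less_iff)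
  with \<open>k \<le> P * Q * R\<close> have "LCS2 4 (multiperms k (\<lambda>_. s)) \<le> M"
    by (intro LCS2_4_multiperms_le[OF assms(1) _ M_def])
  then show ?thesis using \<open>real M \<le> T\<close> unfolding T_def by (meson of_nat_le_iff order_trans)
qed

theorem theorem12:
  fixes s k :: nat
  assumes "0 < s" and "0 < k" and "real s \<le> real k / 5"
  shows "real (LCS2 4 (multiperms k (\<lambda>_. s)))
           \<le> (2 * real s ^ 2 * real k) powr (1/3) + 5/3 * real s
              + real s powr (4/3) * real k powr (-1/3)"
proof -
  have "4 * s \<le> k" using assms(3) by simp
  then obtain u where u: "1 \<le> u" "real k = 4 * real s * u ^ 3"
    and root: "(2 * real s ^ 2 * real k) powr (1/3) = 2 * real s * u"
    using cube_root_parametrization[OF assms(1)] by blast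
  have "real (LCS2 4 (multiperms k (\<lambda>_. s))) \<le> 2 * real s * u + 5/3 * real s"
    using LCS2_4_multiperms_le_cubic[OF assms(1) u] .
  moreover have "0 \<le> real s powr (4/3) * real k powr (-1/3)" by simp
  ultimately show ?thesis unfolding root by linarith
qed

end
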